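(* Let Assumptions 1 and 2 hold and consider Algorithm 2 with $\eta\in(0,1/L_{\mathrm{avg}}]$. Let $\Delta_k=v_k-\nabla f(y_k)$, let $x_{k+1}$ be the $\epsilon_k$-optimal solution of the $k$-th subproblem, and let $u_k\in\mathbb{R}^d$ be any random vector that is independent of the mini-batch $\mathcal{B}_k$ given the past (i.e. determined by $\mathcal B_0,\dots,\mathcal B_{k-1}$). Then $$\mathbb{E}\langle\Delta_k,u_k-x_{k+1}\rangle\le\frac{3\eta}{2}\,\mathbb{E}\|\Delta_k\|_{H^{-1}}^2+\epsilon_k.$$
   Context: Setting. $F(x)=f(x)+h(x)$ on $\mathbb{R}^d$, where $f=\frac1n\sum_{i=1}^n f_i$ with each $f_i:\mathbb{R}^d\to\mathbb{R}$ convex and differentiable, and $h:\mathbb{R}^d\to\mathbb{R}\cup\{+\infty\}$ is proper, convex, lower semicontinuous, with closed domain $\mathrm{dom}\,h$. $H$ is a fixed symmetric positive definite $d\times d$ matrix; $\langle x,y\rangle_H=x^\top Hy$, $\|x\|_H=\sqrt{x^\top Hx}$, $\|x\|_{H^{-1}}=\sqrt{x^\top H^{-1}x}$, and $\langle x,y\rangle=x^\top y$. Assumption 1: each $f_i$ is $L_i$-smooth w.r.t. the $H$-norm, i.e. $\|\nabla f_i(x)-\nabla f_i(y)\|_{H^{-1}}\le L_i\|x-y\|_H$ for all $x,y$; $L_{\mathrm{avg}}=\frac1n\sum_{i=1}^nL_i$. Assumption 2: $f$ is $\mu$-strongly convex w.r.t. the $H$-norm for some $\mu>0$, i.e. $f(y)\ge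 f(x)+\langle\nabla f(x),y-x\rangle+\frac\mu2\|y-x\|_H^2$ for all $x,y$. Subproblem: for $y,v\in\mathbb{R}^d$ and $\eta>0$ let $q(x)=h(x)+\frac1{2\eta}\|x-y+\eta H^{-1}v\|_H^2$; a point $x^+$ is an $\epsilon$-optimal solution if $q(x^+)\le\min_x q(x)+\epsilon$. Algorithm 2 (one outer iteration $s$, given $\tilde x_s$ and parameters $\eta,\tau\in(0,1),\mu,b,T$ and tolerances $\epsilon_0,\dots,\epsilon_{T-1}\ge0$): compute $\nabla f(\tilde x_s)$; set $x_0=z_0=\tilde x_s$; for $k=0,\dots,T-1$: $y_k=\frac{1}{1+\tau}x_k+\frac{\tau}{1+\tau}z_k$; draw a mini-batch $\mathcal{B}_k$ of $b$ indices sampled independently (of each other and of the past) from $\{1,\dots,n\}$ with $\Pr(i)=p_i=L_i/(nL_{\mathrm{avg}})$; $v_k=\frac1b\sum_{i\in\mathcal B_k}\frac{\nabla f_i(y_k)-\nabla f_i(\tilde x_s)}{np_i}+\nabla f(\tilde x_s)$; let $x_{k+1}$ be an $\epsilon_k$-optimal solution of the subproblem with $y=y_k$, $v=v_k$; $g_{k+1}=(y_k-x_{k+1})/\eta$; $z_{k+1}=z_k+\tau(y_k-z_k)-\frac\tau\mu g_{k+1}$. Finally $\tilde x_{s+1}=x_T$. Expectations are over the mini-batch randomness. *)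

theory Defs
  imports "HOL-Analysis.Analysis" "HOL-Probability.Probability"
begin

definition wnorm :: "real^'n^'n \<Rightarrow> real^'n \<Rightarrow> real" where
  "wnorm M x = sqrt (x \<bullet> (M *v x))"

definition sym_pos_def_mat :: "real^'n^'n \<Rightarrow> bool" where
  "sym_pos_def_mat M \<longleftrightarrow> transpose M = M \<and> (\<forall>x. x \<noteq> 0 \<longrightarrow> x \<bullet> (M *v x) > 0)"

definition edom :: "('a \<Rightarrow> ereal) \<Rightarrow> 'a set" where
  "edom h = {x. h x < \<infinity>}"

definition proper_fun :: "('a \<Rightarrow> ereal) \<Rightarrow> bool" where
  "proper_fun h \<longleftrightarrow> (\<forall>x. h x \<noteq> -\<infinity>) \<and> edom h \<noteq> {}"

definition econvex :: "('a::real_vector \<Rightarrow> ereal) \<Rightarrow> bool" where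
  "econvex h \<longleftrightarrow> (\<forall>x y t. 0 < t \<and> t < 1 \<longrightarrow>
      h ((1 - t) *\<^sub>R x + t *\<^sub>R y) \<le> ereal (1 - t) * h x + ereal t * h y)"

definition lsc_fun :: "('a::topological_space \<Rightarrow> ereal) \<Rightarrow> bool" where
  "lsc_fun h \<longleftrightarrow> (\<forall>x. h x \<le> Liminf (at x) h)"

definition subprob :: "(real^'n \<Rightarrow> ereal) \<Rightarrow> real^'n^'n \<Rightarrow> real \<Rightarrow> real^'n \<Rightarrow> real^'n \<Rightarrow> real^'n \<Rightarrow> ereal" where
  "subprob h H eta y v x =
     h x + ereal (1 / (2 * eta) * (wnorm H (x - y + eta *\<^sub>R (matrix_inv H *v v)))\<^sup>2)"

definition eps_opt :: "(real^'n \<Rightarrow> ereal) \<Rightarrow> real^'n^'n \<Rightarrow> real \<Rightarrow> real^'n \<Rightarrow> real^'n \<Rightarrow> real \<Rightarrow> real^'n \<Rightarrow> bool" where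
  "eps_opt h H eta y v eps xp \<longleftrightarrow>
     subprob h H eta y v xp \<le> (INF x. subprob h H eta y v x) + ereal eps"

text \<open>Index i in {0..<n} (standing for the paper's {1..n}) drawn with probability
  p_i = L_i / (n L_avg).\<close>
definition Lavg :: "nat \<Rightarrow> (nat \<Rightarrow> real) \<Rightarrow> real" where
  "Lavg n L = (\<Sum>i<n. L i) / real n"

definition prob_i :: "nat \<Rightarrow> (nat \<Rightarrow> real) \<Rightarrow> nat \<Rightarrow> real" where
  "prob_i n L i = L i / (real n * Lavg n L)"

definition index_pmf :: "nat \<Rightarrow> (nat \<Rightarrow> real) \<Rightarrow> nat pmf" where
  "index_pmf n L = embed_pmf (\<lambda>i. if i < n then prob_i n L i else 0)"

definition batch_pmf :: "nat \<Rightarrow> (nat \<Rightarrow> real) \<Rightarrow> nat \<Rightarrow> nat list pmf" where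
  "batch_pmf n L b = replicate_pmf b (index_pmf n L)"

definition fgrad :: "nat \<Rightarrow> (nat \<Rightarrow> real^'n \<Rightarrow> real^'n) \<Rightarrow> real^'n \<Rightarrow> real^'n" where
  "fgrad n gf x = (1 / real n) *\<^sub>R (\<Sum>i<n. gf i x)"

definition y_of :: "real \<Rightarrow> real^'n \<Rightarrow> real^'n \<Rightarrow> real^'n" where
  "y_of tau x z = (1 / (1 + tau)) *\<^sub>R x + (tau / (1 + tau)) *\<^sub>R z"

definition vr_grad :: "nat \<Rightarrow> (nat \<Rightarrow> real) \<Rightarrow> (nat \<Rightarrow> real^'n \<Rightarrow> real^'n) \<Rightarrow> nat \<Rightarrow> real^'n
    \<Rightarrow> nat list \<Rightarrow> real^'n \<Rightarrow> real^'n" where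
  "vr_grad n L gf b xt B y =
     (1 / real b) *\<^sub>R
       (\<Sum>i\<leftarrow>B. (1 / (real n * prob_i n L i)) *\<^sub>R (gf i y - gf i xt))
     + fgrad n gf xt"

text \<open>sel Bs is the point x_{k+1} returned by the (inexact) subproblem solver when
  Bs = [B_0,...,B_k] are the mini-batches drawn so far; the solver may depend on the
  whole history. traj ... Bs k = (x_k, z_k).\<close>
fun traj :: "nat \<Rightarrow> (nat \<Rightarrow> real) \<Rightarrow> (nat \<Rightarrow> real^'n \<Rightarrow> real^'n) \<Rightarrow> real \<Rightarrow> real \<Rightarrow> real
    \<Rightarrow> real^'n \<Rightarrow> (nat list list \<Rightarrow> real^'n) \<Rightarrow> nat list list \<Rightarrow> nat \<Rightarrow> (real^'n) \<times> (real^'n)" where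
  "traj n L gf eta tau mu xt sel Bs 0 = (xt, xt)"
| "traj n L gf eta tau mu xt sel Bs (Suc k) =
     (let (x, z) = traj n L gf eta tau mu xt sel Bs k;
          y = y_of tau x z;
          x' = sel (take (Suc k) Bs);
          g = (1 / eta) *\<^sub>R (y - x')
      in (x', z + tau *\<^sub>R (y - z) - (tau / mu) *\<^sub>R g))"

end

theory Submission
  imports Defs
begin

(* Let xbar be the proximal step taken with the exact gradient at y_k instead of v_k. It is
   determined by the past, so E <Delta_k, u_k - xbar> = 0 because v_k is unbiased. The
   remaining term <Delta_k, xbar - x_{k+1}> is bounded through the 1/eta-strong convexity of the
   subproblem: changing the gradient moves the minimiser by at most eta |Delta_k|, the
   epsilon-optimal point is within sqrt(2 eta epsilon) of the minimiser, and Young's inequality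
   turns these into 3 eta/2 |Delta_k|^2 + epsilon.
   Since h is only proper, convex and lower semicontinuous, minimisers are replaced by
   delta-optimal points; strong convexity along the segment [p, w] with weight t then yields the
   same estimates with an extra factor 1/(1 - t) and an error 3 delta/t, and delta = t^2, t -> 0
   recovers the bound. *)

definition quad_form :: "real^'n^'n \<Rightarrow> real^'n \<Rightarrow> real" where
  "quad_form M x = x \<bullet> (M *v x)"

lemma quad_form_nonneg: "sym_pos_def_mat M \<Longrightarrow> 0 \<le> quad_form M x"
  unfolding sym_pos_def_mat_def quad_form_def by (cases "x = 0") (auto intro: less_imp_le)

lemma quad_form_pos: "sym_pos_def_mat M \<Longrightarrow> x \<noteq> 0 \<Longrightarrow> 0 < quad_form M x"
  unfolding sym_pos_def_mat_def quad_form_def by blast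

lemma wnorm_square: "sym_pos_def_mat M \<Longrightarrow> (wnorm M x)\<^sup>2 = quad_form M x"
  using quad_form_nonneg[of M x] unfolding wnorm_def quad_form_def by simp

lemma wnorm_nonneg: "sym_pos_def_mat M \<Longrightarrow> 0 \<le> wnorm M x"
  using quad_form_nonneg[of M x] unfolding wnorm_def quad_form_def by simp

lemma wnorm_pos: "sym_pos_def_mat M \<Longrightarrow> x \<noteq> 0 \<Longrightarrow> 0 < wnorm M x"
  using quad_form_pos unfolding wnorm_def quad_form_def by simp

lemma wnorm_eq_0_iff: "sym_pos_def_mat M \<Longrightarrow> wnorm M x = 0 \<longleftrightarrow> x = 0"
  using wnorm_pos[of M x] by (cases "x = 0") (auto simp: wnorm_def)

lemma sym_pos_def_mat_inner_commute:
  assumes "sym_pos_def_mat M"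
  shows "a \<bullet> (M *v b) = b \<bullet> (M *v a)"
proof -
  have "a \<bullet> (M *v b) = (a v* M) \<bullet> b" by (simp add: dot_lmul_matrix)
  also have "a v* M = transpose M *v a" by simp
  also have "transpose M = M" using assms by (simp add: sym_pos_def_mat_def)
  finally show ?thesis by (simp add: inner_commute)
qed

lemma sym_pos_def_mat_matrix_inv_mult:
  assumes "sym_pos_def_mat M"
  shows "M ** matrix_inv M = mat 1" and "matrix_inv M ** M = mat 1"
proof -
  have "\<forall>x. M *v x = 0 \<longrightarrow> x = 0"
    using assms unfolding sym_pos_def_mat_def by (metis inner_zero_right less_irrefl)
  then obtain B where "B ** M = mat 1" using matrix_left_invertible_ker by blast
  then have "M ** B = mat 1 \<and> B ** M = mat 1" using matrix_left_right_inverse by blast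
  then have "M ** matrix_inv M = mat 1 \<and> matrix_inv M ** M = mat 1"
    unfolding matrix_inv_def by (rule someI)
  then show "M ** matrix_inv M = mat 1" and "matrix_inv M ** M = mat 1" by blast+
qed

lemma matrix_inv_cancel: "sym_pos_def_mat M \<Longrightarrow> M *v (matrix_inv M *v x) = x"
  by (simp add: matrix_vector_mul_assoc sym_pos_def_mat_matrix_inv_mult)

lemma quad_form_matrix_inv:
  "sym_pos_def_mat M \<Longrightarrow> quad_form M (matrix_inv M *v d) = quad_form (matrix_inv M) d"
  unfolding quad_form_def by (simp add: matrix_inv_cancel inner_commute)

lemma sym_pos_def_mat_matrix_inv:
  assumes S: "sym_pos_def_mat M"
  shows "sym_pos_def_mat (matrix_inv M)"
  unfolding sym_pos_def_mat_def
proof safe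
  define N where "N = matrix_inv M"
  have "transpose N = transpose N ** (M ** N)"
    by (simp add: N_def sym_pos_def_mat_matrix_inv_mult[OF S])
  also have "\<dots> = transpose (M ** N) ** N"
    using S by (simp add: matrix_mul_assoc matrix_transpose_mul sym_pos_def_mat_def)
  also have "\<dots> = N" by (simp add: N_def sym_pos_def_mat_matrix_inv_mult[OF S] transpose_mat)
  finally show "transpose (matrix_inv M) = matrix_inv M" by (simp add: N_def)
next
  fix d :: "real^'a" assume "d \<noteq> 0"
  then have "matrix_inv M *v d \<noteq> 0" using matrix_inv_cancel[OF S, of d] by auto
  then have "0 < quad_form M (matrix_inv M *v d)" by (rule quad_form_pos[OF S])
  then have "0 < quad_form (matrix_inv M) d" by (simp only: quad_form_matrix_inv[OF S])
  then show "0 < d \<bullet> (matrix_inv M *v d)" by (simp add: quad_form_def)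
qed

lemma quad_form_add:
  "sym_pos_def_mat M \<Longrightarrow> quad_form M (a + b) = quad_form M a + 2 * (a \<bullet> (M *v b)) + quad_form M b"
  using sym_pos_def_mat_inner_commute[of M b a]
  by (simp add: quad_form_def matrix_vector_right_distrib inner_add_left inner_add_right)

lemma quad_form_diff:
  "sym_pos_def_mat M \<Longrightarrow> quad_form M (a - b) = quad_form M a - 2 * (a \<bullet> (M *v b)) + quad_form M b"
  using sym_pos_def_mat_inner_commute[of M b a]
  by (simp add: quad_form_def matrix_vector_mult_diff_distrib inner_diff_left inner_diff_right)

lemma quad_form_scaleR: "quad_form M (c *\<^sub>R a) = c\<^sup>2 * quad_form M a"
  by (simp add: quad_form_def matrix_vector_mult_scaleR power2_eq_square)

lemma quad_form_minus_commute: "quad_form M (a - b) = quad_form M (b - a)"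
  using quad_form_scaleR[of M "-1" "b - a"] by simp

lemma quad_form_convex_comb:
  assumes S: "sym_pos_def_mat M"
  shows "quad_form M ((1 - t) *\<^sub>R a + t *\<^sub>R b)
       = (1 - t) * quad_form M a + t * quad_form M b - t * (1 - t) * quad_form M (a - b)"
proof -
  have "quad_form M ((1 - t) *\<^sub>R a + t *\<^sub>R b)
      = (1 - t)\<^sup>2 * quad_form M a + 2 * ((1 - t) * t * (a \<bullet> (M *v b))) + t\<^sup>2 * quad_form M b"
    by (simp add: quad_form_add[OF S] quad_form_scaleR matrix_vector_mult_scaleR)
  then show ?thesis by (simp add: quad_form_diff[OF S] power2_eq_square algebra_simps)
qed

lemma inner_le_quad_form:
  assumes S: "sym_pos_def_mat M" and c: "c > 0"
  shows "w \<bullet> d \<le> c / 2 * quad_form (matrix_inv M) d + quad_form M w / (2 * c)"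
proof -
  define a where "a = matrix_inv M *v d"
  have "0 \<le> quad_form M (c *\<^sub>R a - w)" by (rule quad_form_nonneg[OF S])
  also have "\<dots> = c\<^sup>2 * quad_form (matrix_inv M) d - 2 * c * (w \<bullet> d) + quad_form M w"
    using sym_pos_def_mat_inner_commute[OF S, of a w]
    by (simp add: quad_form_diff[OF S] quad_form_scaleR matrix_vector_mult_scaleR a_def
        quad_form_matrix_inv[OF S] matrix_inv_cancel[OF S])
  finally show ?thesis using c by (simp add: field_simps power2_eq_square)
qed

lemma lipschitz_wnorm_const_nonneg:
  fixes g :: "real^'n \<Rightarrow> real^'m"
  assumes "sym_pos_def_mat M" "sym_pos_def_mat N"
    and "\<And>x y. wnorm N (g x - g y) \<le> c * wnorm M (x - y)"
  shows "0 \<le> c"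
proof -
  define e :: "real^'n" where "e = (\<chi> j. 1)"
  have "e \<noteq> 0" by (simp add: e_def vec_eq_iff)
  then have "0 < wnorm M (e - 0)" by (simp add: wnorm_pos assms(1))
  moreover have "0 \<le> c * wnorm M (e - 0)"
    using assms(3)[of e 0] wnorm_nonneg[OF assms(2), of "g e - g 0"] by linarith
  ultimately show ?thesis by (simp add: zero_le_mult_iff)
qed

lemma lipschitz_wnorm_const_zero:
  fixes g :: "real^'n \<Rightarrow> real^'m"
  assumes "sym_pos_def_mat N"
    and "\<And>x y. wnorm N (g x - g y) \<le> c * wnorm M (x - y)" and "c = 0"
  shows "g x = g y"
proof -
  have "wnorm N (g x - g y) = 0"
    using wnorm_nonneg[OF assms(1), of "g x - g y"] assms(2)[of x y] assms(3) by simp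
  then show ?thesis using wnorm_eq_0_iff[OF assms(1)] by simp
qed

definition subprob_quad :: "real^'n^'n \<Rightarrow> real \<Rightarrow> real^'n \<Rightarrow> real^'n \<Rightarrow> real^'n \<Rightarrow> real" where
  "subprob_quad H eta y v z = quad_form H (z - y + eta *\<^sub>R (matrix_inv H *v v)) / (2 * eta)"

lemma subprob_eq:
  "sym_pos_def_mat H \<Longrightarrow> subprob h H eta y v z = h z + ereal (subprob_quad H eta y v z)"
  unfolding subprob_def subprob_quad_def by (simp add: wnorm_square)

lemma subprob_quad_change_grad:
  assumes S: "sym_pos_def_mat H" and eta: "eta > 0"
  shows "subprob_quad H eta y v z = subprob_quad H eta y g z
           + (z - y + eta *\<^sub>R (matrix_inv H *v g)) \<bullet> (v - g)
           + eta / 2 * quad_form (matrix_inv H) (v - g)"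
proof -
  define w where "w = z - y + eta *\<^sub>R (matrix_inv H *v g)"
  have "z - y + eta *\<^sub>R (matrix_inv H *v v) = w + eta *\<^sub>R (matrix_inv H *v (v - g))"
    by (simp add: w_def matrix_vector_mult_diff_distrib algebra_simps)
  then have "quad_form H (z - y + eta *\<^sub>R (matrix_inv H *v v))
      = quad_form H w + 2 * eta * (w \<bullet> (v - g)) + eta\<^sup>2 * quad_form (matrix_inv H) (v - g)"
    by (simp add: quad_form_add[OF S] quad_form_scaleR matrix_vector_mult_scaleR
        matrix_inv_cancel[OF S] quad_form_matrix_inv[OF S])
  then show ?thesis using eta
    by (simp add: subprob_quad_def w_def add_divide_distrib power2_eq_square)
qed

text \<open>Comparing p with points of the segment from p to w replaces the exact minimiser,
  which need not be attained.\<close>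
lemma eps_opt_growth:
  assumes S: "sym_pos_def_mat H" and h_convex: "econvex h" and h_proper: "proper_fun h"
    and eta: "eta > 0"
    and t: "0 < t" "t < 1"
    and popt: "eps_opt h H eta y v \<delta> p"
    and hp_eq: "h p = ereal hp" and hw_eq: "h w = ereal hw"
  shows "t * (1 - t) / (2 * eta) * quad_form H (w - p)
          \<le> t * ((hw + subprob_quad H eta y v w) - (hp + subprob_quad H eta y v p)) + \<delta>"
proof -
  define Q where "Q = subprob_quad H eta y v"
  define z where "z = (1 - t) *\<^sub>R p + t *\<^sub>R w"
  have "h z \<le> ereal (1 - t) * h p + ereal t * h w"
    using h_convex t unfolding econvex_def z_def by blast
  then have hz_le: "h z \<le> ereal ((1 - t) * hp + t * hw)" by (simp add: hp_eq hw_eq)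
  moreover have "h z \<noteq> -\<infinity>" using h_proper unfolding proper_fun_def by blast
  ultimately obtain hz where hz_eq: "h z = ereal hz" by (cases "h z") auto
  have "ereal (hp + Q p) = subprob h H eta y v p" by (simp add: subprob_eq[OF S] hp_eq Q_def)
  also have "\<dots> \<le> (INF x. subprob h H eta y v x) + ereal \<delta>"
    using popt by (simp add: eps_opt_def)
  also have "\<dots> \<le> subprob h H eta y v z + ereal \<delta>" by (intro add_right_mono INF_lower) auto
  also have "\<dots> = ereal (hz + Q z + \<delta>)" by (simp add: subprob_eq[OF S] hz_eq Q_def)
  finally have "hp + Q p \<le> hz + Q z + \<delta>" by simp
  moreover have "Q z = (1 - t) * Q p + t * Q w - t * (1 - t) / (2 * eta) * quad_form H (w - p)"
  proof -
    define c where "c = y - eta *\<^sub>R (matrix_inv H *v v)"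
    have "z - c = (1 - t) *\<^sub>R (p - c) + t *\<^sub>R (w - c)" by (simp add: z_def algebra_simps)
    moreover have "(p - c) - (w - c) = p - w" by simp
    moreover have "\<And>x. Q x = quad_form H (x - c) / (2 * eta)"
      by (simp add: Q_def subprob_quad_def c_def algebra_simps)
    ultimately show ?thesis
      by (simp add: quad_form_convex_comb[OF S] quad_form_minus_commute[of H p w]
          add_divide_distrib diff_divide_distrib)
  qed
  ultimately show ?thesis using hz_le hz_eq by (simp add: Q_def algebra_simps)
qed

lemma subprob_INF_less_infinity:
  assumes S: "sym_pos_def_mat H" and h_proper: "proper_fun h"
  shows "(INF z. subprob h H eta y v z) < \<infinity>"
proof -
  obtain x0 where "h x0 < \<infinity>" using h_proper unfolding proper_fun_def edom_def by auto
  then have "subprob h H eta y v x0 < \<infinity>" by (simp add: subprob_eq[OF S])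
  moreover have "(INF z. subprob h H eta y v z) \<le> subprob h H eta y v x0" by (rule INF_lower) auto
  ultimately show ?thesis by (meson le_less_trans)
qed

lemma eps_opt_finite:
  assumes S: "sym_pos_def_mat H" and h_proper: "proper_fun h" and xopt: "eps_opt h H eta y v e x"
  shows "\<exists>hx. h x = ereal hx" and "\<exists>m. (INF z. subprob h H eta y v z) = ereal m"
proof -
  define I where "I = (INF z. subprob h H eta y v z)"
  have I_fin: "I < \<infinity>" unfolding I_def by (rule subprob_INF_less_infinity[OF S h_proper])
  have x_le: "subprob h H eta y v x \<le> I + ereal e" using xopt unfolding eps_opt_def I_def .
  have "h x \<noteq> -\<infinity>" using h_proper unfolding proper_fun_def by blast
  moreover have "h x < \<infinity>" using x_le I_fin
    by (cases I) (auto simp: subprob_eq[OF S])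
  ultimately obtain hx where hx: "h x = ereal hx" by (cases "h x") auto
  then show "\<exists>hx. h x = ereal hx" ..
  have "I \<noteq> -\<infinity>" using x_le by (auto simp: subprob_eq[OF S] hx)
  then show "\<exists>m. (INF z. subprob h H eta y v z) = ereal m"
    using I_fin unfolding I_def by (cases "(INF z. subprob h H eta y v z)") auto
qed

lemma eps_opt_exists:
  assumes "(INF z. subprob h H eta y v z) = ereal m" and "\<delta> > 0"
  shows "\<exists>p. eps_opt h H eta y v \<delta> p"
proof -
  have "(INF z. subprob h H eta y v z) < ereal (m + \<delta>)" using assms by simp
  then obtain p where "subprob h H eta y v p < ereal (m + \<delta>)" by (auto simp: INF_less_iff)
  then show ?thesis unfolding eps_opt_def using assms by (intro exI[of _ p]) simp
qed

text \<open>Changing v only adds an affine term to the subproblem, which the quadratic growth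
  around an approximate minimiser dominates.\<close>
lemma eps_opt_INF_change_grad:
  assumes S: "sym_pos_def_mat H" and h_convex: "econvex h" and h_proper: "proper_fun h"
    and eta: "eta > 0"
    and xopt: "eps_opt h H eta y v e x"
  shows "\<exists>m. (INF z. subprob h H eta y g z) = ereal m"
proof -
  obtain mv where "(INF z. subprob h H eta y v z) = ereal mv"
    using eps_opt_finite[OF S h_proper xopt] by blast
  then obtain p where popt: "eps_opt h H eta y v 1 p"
    using eps_opt_exists[of h H eta y v mv 1] by auto
  obtain hp where hp_eq: "h p = ereal hp" using eps_opt_finite[OF S h_proper popt] by blast
  define D where "D = quad_form (matrix_inv H) (v - g)"
  define a where "a = y - eta *\<^sub>R (matrix_inv H *v g)"
  define C where "C = hp + subprob_quad H eta y v p - 2 - 3 * eta / 2 * D - (p - a) \<bullet> (v - g)"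
  have lower: "ereal C \<le> subprob h H eta y g z" for z
  proof (cases "h z")
    case (real hz)
    define N where "N = quad_form H (z - p)"
    have "(1/2) * (1 - 1/2) / (2 * eta) * N
        \<le> (1/2) * ((hz + subprob_quad H eta y v z) - (hp + subprob_quad H eta y v p)) + 1"
      unfolding N_def by (rule eps_opt_growth[OF S h_convex h_proper eta _ _ popt hp_eq real]) auto
    then have "N / (4 * eta) \<le> (hz + subprob_quad H eta y v z) - (hp + subprob_quad H eta y v p) + 2"
      by (simp add: field_simps)
    moreover have "(z - p) \<bullet> (v - g) \<le> eta * D + N / (4 * eta)"
      using inner_le_quad_form[OF S, of "2 * eta" "z - p" "v - g"] eta
      by (simp add: D_def N_def field_simps)
    moreover have "subprob_quad H eta y v z
        = subprob_quad H eta y g z + (z - p) \<bullet> (v - g) + (p - a) \<bullet> (v - g) + eta / 2 * D"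
      using subprob_quad_change_grad[OF S eta, of y v z g]
      by (simp add: D_def a_def inner_diff_left algebra_simps)
    ultimately have "C \<le> hz + subprob_quad H eta y g z"
      unfolding C_def by linarith
    then show ?thesis by (simp add: subprob_eq[OF S] real)
  qed (use h_proper in \<open>auto simp: proper_fun_def subprob_eq[OF S]\<close>)
  have "(INF z. subprob h H eta y g z) < \<infinity>" by (rule subprob_INF_less_infinity[OF S h_proper])
  moreover have "ereal C \<le> (INF z. subprob h H eta y g z)" using lower by (rule INF_greatest)
  ultimately show ?thesis by (cases "(INF z. subprob h H eta y g z)") auto
qed

lemma eps_opt_dist:
  assumes S: "sym_pos_def_mat H" and h_convex: "econvex h" and h_proper: "proper_fun h"
    and eta: "eta > 0"
    and t: "0 < t" "t < 1"
    and xopt: "eps_opt h H eta y v \<epsilon> x" and popt: "eps_opt h H eta y v \<delta> p"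
  shows "(1 - t) / (2 * eta) * quad_form H (x - p) \<le> \<epsilon> + \<delta> / t"
proof -
  define Q where "Q = subprob_quad H eta y v"
  obtain hx where hx: "h x = ereal hx" using eps_opt_finite[OF S h_proper xopt] by blast
  obtain hp where hp_eq: "h p = ereal hp" using eps_opt_finite[OF S h_proper popt] by blast
  have "ereal (hx + Q x) \<le> (INF z. subprob h H eta y v z) + ereal \<epsilon>"
    using xopt by (simp add: eps_opt_def subprob_eq[OF S] hx Q_def)
  also have "\<dots> \<le> subprob h H eta y v p + ereal \<epsilon>" by (intro add_right_mono INF_lower) auto
  also have "\<dots> = ereal (hp + Q p + \<epsilon>)" by (simp add: subprob_eq[OF S] hp_eq Q_def)
  finally have "(hx + Q x) - (hp + Q p) \<le> \<epsilon>" by simp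
  moreover have "t * (1 - t) / (2 * eta) * quad_form H (x - p) \<le> t * ((hx + Q x) - (hp + Q p)) + \<delta>"
    unfolding Q_def by (rule eps_opt_growth[OF S h_convex h_proper eta t popt hp_eq hx])
  moreover have "t * ((1 - t) / (2 * eta) * quad_form H (x - p))
      = t * (1 - t) / (2 * eta) * quad_form H (x - p)" by simp
  moreover have "t * (\<epsilon> + \<delta> / t) = t * \<epsilon> + \<delta>" using t by (simp add: distrib_left)
  ultimately have "t * ((1 - t) / (2 * eta) * quad_form H (x - p)) \<le> t * (\<epsilon> + \<delta> / t)"
    using mult_left_mono[of "(hx + Q x) - (hp + Q p)" \<epsilon> t] t by linarith
  then show ?thesis using t(1) by (rule mult_left_le_imp_le)
qed

lemma eps_opt_change_grad_dist:
  assumes S: "sym_pos_def_mat H" and h_convex: "econvex h" and h_proper: "proper_fun h"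
    and eta: "eta > 0"
    and t: "0 < t" "t < 1"
    and popt: "eps_opt h H eta y v \<delta> p" and qopt: "eps_opt h H eta y g \<delta> q"
  shows "(1 - t) / eta * quad_form H (q - p) \<le> (q - p) \<bullet> (v - g) + 2 * \<delta> / t"
proof -
  define Qv where "Qv = subprob_quad H eta y v"
  define Qg where "Qg = subprob_quad H eta y g"
  obtain hp where hp_eq: "h p = ereal hp" using eps_opt_finite[OF S h_proper popt] by blast
  obtain hq where hq_eq: "h q = ereal hq" using eps_opt_finite[OF S h_proper qopt] by blast
  have "t * (1 - t) / (2 * eta) * quad_form H (q - p) \<le> t * ((hq + Qv q) - (hp + Qv p)) + \<delta>"
    unfolding Qv_def by (rule eps_opt_growth[OF S h_convex h_proper eta t popt hp_eq hq_eq])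
  moreover have "t * (1 - t) / (2 * eta) * quad_form H (p - q) \<le> t * ((hp + Qg p) - (hq + Qg q)) + \<delta>"
    unfolding Qg_def by (rule eps_opt_growth[OF S h_convex h_proper eta t qopt hq_eq hp_eq])
  moreover have "t * ((q - p) \<bullet> (v - g) + 2 * \<delta> / t) = t * ((q - p) \<bullet> (v - g)) + 2 * \<delta>"
    using t by (simp add: distrib_left)
  moreover have "t * ((1 - t) / eta * quad_form H (q - p))
      = t * (1 - t) / (2 * eta) * quad_form H (q - p) + t * (1 - t) / (2 * eta) * quad_form H (p - q)"
    using quad_form_minus_commute[of H p q] by (simp add: field_simps)
  moreover have "t * ((hq + Qv q) - (hp + Qv p)) + t * ((hp + Qg p) - (hq + Qg q))
      = t * ((q - p) \<bullet> (v - g))"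
  proof -
    have "(Qv q - Qg q) - (Qv p - Qg p) = (q - p) \<bullet> (v - g)"
      using subprob_quad_change_grad[OF S eta, of y v q g] subprob_quad_change_grad[OF S eta, of y v p g]
      by (simp add: Qv_def Qg_def inner_diff_left inner_add_left)
    then have "((hq + Qv q) - (hp + Qv p)) + ((hp + Qg p) - (hq + Qg q)) = (q - p) \<bullet> (v - g)"
      by linarith
    then show ?thesis by (simp flip: distrib_left)
  qed
  ultimately have "t * ((1 - t) / eta * quad_form H (q - p)) \<le> t * ((q - p) \<bullet> (v - g) + 2 * \<delta> / t)"
    by linarith
  then show ?thesis using t(1) by (rule mult_left_le_imp_le)
qed

lemma eps_opt_inner_bound:
  assumes S: "sym_pos_def_mat H" and h_convex: "econvex h" and h_proper: "proper_fun h"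
    and eta: "eta > 0"
    and t: "0 < t" "t < 1" and \<delta>: "\<delta> > 0"
    and xopt: "eps_opt h H eta y v \<epsilon> x" and qopt: "eps_opt h H eta y g \<delta> q"
  shows "(q - x) \<bullet> (v - g)
           \<le> 3 * eta / (2 * (1 - t)) * quad_form (matrix_inv H) (v - g) + \<epsilon> + 3 * \<delta> / t"
proof -
  define D where "D = quad_form (matrix_inv H) (v - g)"
  define c where "c = eta / (1 - t)"
  have c: "c > 0" using eta t by (simp add: c_def)
  obtain m where "(INF z. subprob h H eta y v z) = ereal m"
    using eps_opt_finite[OF S h_proper xopt] by blast
  then obtain p where popt: "eps_opt h H eta y v \<delta> p" using eps_opt_exists \<delta> by blast
  have "(q - p) \<bullet> (v - g) \<le> c / 2 * D + quad_form H (q - p) / (2 * c)"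
    unfolding D_def by (rule inner_le_quad_form[OF S c])
  moreover have "quad_form H (q - p) / (2 * c) \<le> (q - p) \<bullet> (v - g) / 2 + \<delta> / t"
  proof -
    have "quad_form H (q - p) / (2 * c) = (1 - t) / eta * quad_form H (q - p) / 2"
      using eta t by (simp add: c_def field_simps)
    also have "\<dots> \<le> ((q - p) \<bullet> (v - g) + 2 * \<delta> / t) / 2"
      using eps_opt_change_grad_dist[OF S h_convex h_proper eta t popt qopt] by simp
    finally show ?thesis by (simp add: add_divide_distrib)
  qed
  moreover have "(p - x) \<bullet> (v - g) \<le> c / 2 * D + quad_form H (x - p) / (2 * c)"
    using inner_le_quad_form[OF S c, of "p - x" "v - g"] quad_form_minus_commute[of H p x]
    by (simp add: D_def)
  moreover have "quad_form H (x - p) / (2 * c) \<le> \<epsilon> + \<delta> / t"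
  proof -
    have "quad_form H (x - p) / (2 * c) = (1 - t) / (2 * eta) * quad_form H (x - p)"
      using eta t by (simp add: c_def field_simps)
    then show ?thesis using eps_opt_dist[OF S h_convex h_proper eta t xopt popt] by simp
  qed
  moreover have "(q - x) \<bullet> (v - g) = (q - p) \<bullet> (v - g) + (p - x) \<bullet> (v - g)"
    by (simp add: inner_diff_left)
  ultimately have "(q - x) \<bullet> (v - g) \<le> 3 * (c / 2 * D) + \<epsilon> + 3 * (\<delta> / t)" by linarith
  then show ?thesis using t by (simp add: c_def D_def field_simps)
qed

lemma finite_set_pmf_replicate_pmf:
  "finite (set_pmf p) \<Longrightarrow> finite (set_pmf (replicate_pmf k p))"
  unfolding set_replicate_pmf
  by (rule finite_subset[OF _ finite_lists_length_eq[of "set_pmf p" k]]) (auto simp: lists_eq_set)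

lemma expectation_bind_pmf_finite:
  fixes f :: "'b \<Rightarrow> real"
  assumes "finite (set_pmf p)" "\<And>x. x \<in> set_pmf p \<Longrightarrow> finite (set_pmf (q x))"
  shows "measure_pmf.expectation (p \<bind> q) f
       = measure_pmf.expectation p (\<lambda>x. measure_pmf.expectation (q x) f)"
proof -
  have "measure_pmf.expectation (p \<bind> q) f
      = (\<Sum>a\<in>set_pmf p. pmf p a *\<^sub>R measure_pmf.expectation (q a) f)"
    using assms by (intro pmf_expectation_bind) auto
  also have "\<dots> = measure_pmf.expectation p (\<lambda>x. measure_pmf.expectation (q x) f)"
    using assms by (subst integral_measure_pmf[of "set_pmf p"]) auto
  finally show ?thesis .
qed

lemma expectation_replicate_pmf_Suc:
  fixes f :: "'a list \<Rightarrow> real"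
  assumes fin: "finite (set_pmf p)"
  shows "measure_pmf.expectation (replicate_pmf (Suc k) p) f
       = measure_pmf.expectation (replicate_pmf k p)
           (\<lambda>xs. measure_pmf.expectation p (\<lambda>x. f (xs @ [x])))"
proof -
  have "replicate_pmf (Suc k) p = replicate_pmf (k + 1) p" by simp
  also have "\<dots> = replicate_pmf k p \<bind> (\<lambda>xs. map_pmf (\<lambda>x. xs @ [x]) p)"
    unfolding replicate_pmf_distrib replicate_pmf_1
    by (simp add: bind_map_pmf map_pmf_def bind_assoc_pmf bind_return_pmf)
  finally show ?thesis
    by (simp add: expectation_bind_pmf_finite finite_set_pmf_replicate_pmf fin)
qed

lemma expectation_replicate_pmf_sum_list:
  fixes f :: "'a \<Rightarrow> real"
  assumes fin: "finite (set_pmf p)"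
  shows "measure_pmf.expectation (replicate_pmf k p) (\<lambda>xs. sum_list (map f xs))
       = real k * measure_pmf.expectation p f"
proof (induction k)
  case (Suc k)
  have int: "integrable (measure_pmf (replicate_pmf k p)) g" for g :: "'a list \<Rightarrow> real"
    by (simp add: integrable_measure_pmf_finite finite_set_pmf_replicate_pmf fin)
  have "measure_pmf.expectation (replicate_pmf (Suc k) p) (\<lambda>xs. sum_list (map f xs))
      = measure_pmf.expectation p (\<lambda>x. measure_pmf.expectation (replicate_pmf k p)
          (\<lambda>xs. f x + sum_list (map f xs)))"
    by (simp add: map_pmf_def[symmetric] expectation_bind_pmf_finite finite_set_pmf_replicate_pmf fin)
  also have "\<dots> = measure_pmf.expectation p (\<lambda>x. f x + real k * measure_pmf.expectation p f)"
    by (simp add: Bochner_Integration.integral_add[OF int int] Suc.IH)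
  also have "\<dots> = real (Suc k) * measure_pmf.expectation p f"
    by (subst Bochner_Integration.integral_add)
      (auto simp: integrable_measure_pmf_finite fin algebra_simps)
  finally show ?case .
qed simp

lemma pmf_index_pmf:
  assumes n: "n > 0" and L_nonneg: "\<And>i. i < n \<Longrightarrow> 0 \<le> L i" and L_avg: "Lavg n L > 0"
  shows "pmf (index_pmf n L) i = (if i < n then prob_i n L i else 0)"
proof -
  define f where "f i = (if i < n then prob_i n L i else 0)" for i
  have f_nonneg: "0 \<le> f i" for i
    unfolding f_def prob_i_def using L_nonneg L_avg n by auto
  have "(\<Sum>i<n. f i) = (\<Sum>i<n. L i) / (real n * Lavg n L)"
    by (simp add: f_def prob_i_def sum_divide_distrib)
  also have "(\<Sum>i<n. L i) = real n * Lavg n L" using n by (simp add: Lavg_def)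
  also have "(real n * Lavg n L) / (real n * Lavg n L) = 1" using n L_avg by simp
  finally have sum_f: "(\<Sum>i<n. f i) = 1" .
  have "(\<integral>\<^sup>+i. ennreal (f i) \<partial>count_space UNIV) = (\<Sum>i<n. ennreal (f i))"
    by (rule nn_integral_count_space') (auto simp: f_def)
  also have "\<dots> = 1" using f_nonneg sum_f by (simp add: sum_ennreal)
  finally have "(\<integral>\<^sup>+i. ennreal (f i) \<partial>count_space UNIV) = 1" .
  then show ?thesis
    unfolding index_pmf_def f_def[symmetric] by (simp add: pmf_embed_pmf f_nonneg)
qed

lemma set_pmf_index_pmf:
  assumes "n > 0" "\<And>i. i < n \<Longrightarrow> 0 \<le> L i" "Lavg n L > 0"
  shows "set_pmf (index_pmf n L) \<subseteq> {..<n}"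
  using pmf_index_pmf[OF assms] by (auto simp: set_pmf_eq)

lemma finite_set_pmf_batch_pmf:
  assumes "n > 0" "\<And>i. i < n \<Longrightarrow> 0 \<le> L i" "Lavg n L > 0"
  shows "finite (set_pmf (batch_pmf n L b))"
  unfolding batch_pmf_def using set_pmf_index_pmf[OF assms]
  by (meson finite_lessThan finite_set_pmf_replicate_pmf finite_subset)

text \<open>Indices with p_i = 0 are never drawn (and their weight is 1/0 = 0), so their
  contribution must vanish.\<close>
lemma expectation_index_pmf_reweighted:
  assumes n: "n > 0" and L_nonneg: "\<And>i. i < n \<Longrightarrow> 0 \<le> L i" and L_avg: "Lavg n L > 0"
    and vanish: "\<And>i. i < n \<Longrightarrow> L i = 0 \<Longrightarrow> \<phi> i = 0"
  shows "measure_pmf.expectation (index_pmf n L) (\<lambda>i. \<phi> i / (real n * prob_i n L i))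
       = (\<Sum>i<n. \<phi> i) / real n"
proof -
  have "measure_pmf.expectation (index_pmf n L) (\<lambda>i. \<phi> i / (real n * prob_i n L i))
      = (\<Sum>i<n. pmf (index_pmf n L) i * (\<phi> i / (real n * prob_i n L i)))"
    using set_pmf_index_pmf[OF n L_nonneg L_avg] by (subst integral_measure_pmf[of "{..<n}"]) auto
  also have "\<dots> = (\<Sum>i<n. \<phi> i / real n)"
  proof (rule sum.cong[OF refl])
    fix i assume i: "i \<in> {..<n}"
    show "pmf (index_pmf n L) i * (\<phi> i / (real n * prob_i n L i)) = \<phi> i / real n"
      using i vanish[of i] n L_avg
      by (cases "L i = 0") (auto simp: pmf_index_pmf[OF n L_nonneg L_avg] prob_i_def)
  qed
  finally show ?thesis by (simp add: sum_divide_distrib)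
qed

lemma inner_sum_list_left: "sum_list (map f xs) \<bullet> w = sum_list (map (\<lambda>x. f x \<bullet> w) xs)"
  by (induction xs) (auto simp: inner_add_left)

lemma expectation_vr_grad_error_inner:
  fixes gf :: "nat \<Rightarrow> real^'d \<Rightarrow> real^'d"
  assumes n: "n > 0" and b: "b > 0" and L_nonneg: "\<And>i. i < n \<Longrightarrow> 0 \<le> L i"
    and L_avg: "Lavg n L > 0" and grad_const: "\<And>i x y. i < n \<Longrightarrow> L i = 0 \<Longrightarrow> gf i x = gf i y"
  shows "measure_pmf.expectation (batch_pmf n L b)
           (\<lambda>B. (vr_grad n L gf b xt B y - fgrad n gf y) \<bullet> w) = 0"
proof -
  define p where "p = index_pmf n L"
  define \<phi> where "\<phi> i = (gf i y - gf i xt) \<bullet> w" for i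
  define c where "c = (fgrad n gf xt - fgrad n gf y) \<bullet> w"
  have fin: "finite (set_pmf p)"
    using set_pmf_index_pmf[OF n L_nonneg L_avg] unfolding p_def by (meson finite_lessThan finite_subset)
  have "(vr_grad n L gf b xt B y - fgrad n gf y) \<bullet> w
      = sum_list (map (\<lambda>i. \<phi> i / (real n * prob_i n L i)) B) / real b + c" for B
    by (simp add: vr_grad_def \<phi>_def c_def inner_diff_left inner_add_left inner_sum_list_left
        add_diff_eq)
  moreover have "measure_pmf.expectation p (\<lambda>i. \<phi> i / (real n * prob_i n L i)) = - c"
  proof -
    have "\<phi> i = 0" if "i < n" "L i = 0" for i
      using grad_const[OF that, of y xt] by (simp add: \<phi>_def)
    then have "measure_pmf.expectation p (\<lambda>i. \<phi> i / (real n * prob_i n L i)) = (\<Sum>i<n. \<phi> i) / real n"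
      unfolding p_def using expectation_index_pmf_reweighted[OF n L_nonneg L_avg] by blast
    also have "\<dots> = - c"
      by (simp add: \<phi>_def c_def fgrad_def inner_diff_left inner_sum_left sum_subtractf
          diff_divide_distrib)
    finally show ?thesis .
  qed
  ultimately show ?thesis
    using b by (simp add: batch_pmf_def p_def[symmetric] integrable_measure_pmf_finite
        finite_set_pmf_replicate_pmf fin expectation_replicate_pmf_sum_list)
qed

lemma traj_append:
  "m \<le> length Bs \<Longrightarrow> traj n L gf eta tau mu xt sel (Bs @ Cs) m = traj n L gf eta tau mu xt sel Bs m"
  by (induction m) (auto simp: Let_def)

lemma le_of_forall_le_div_one_minus:
  fixes a b c K :: real
  assumes "\<And>t. 0 < t \<Longrightarrow> t < 1 \<Longrightarrow> a \<le> b / (1 - t) + c + K * t"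
  shows "a \<le> b + c"
proof -
  have "((\<lambda>t. b / (1 - t) + c + K * t) \<longlongrightarrow> b / (1 - 0) + c + K * 0) (at_right 0)"
    by (intro tendsto_intros) auto
  moreover have "eventually (\<lambda>t. a \<le> b / (1 - t) + c + K * t) (at_right (0::real))"
    using eventually_at_right_real[of 0 "1::real"] by (auto intro: assms elim!: eventually_mono)
  ultimately show ?thesis by (intro tendsto_lowerbound) auto
qed

lemma expectation_noise_inner_le:
  fixes P :: "'a pmf" and Y X u :: "'a list \<Rightarrow> real^'n"
    and V :: "'a \<Rightarrow> real^'n \<Rightarrow> real^'n" and G :: "real^'n \<Rightarrow> real^'n"
  assumes fin: "finite (set_pmf P)"
    and S: "sym_pos_def_mat H" and h_convex: "econvex h" and h_proper: "proper_fun h"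
    and eta: "eta > 0"
    and unbiased: "\<And>y w. measure_pmf.expectation P (\<lambda>B. (V B y - G y) \<bullet> w) = 0"
    and adapted: "\<And>Bs. length Bs = Suc k \<Longrightarrow> Y Bs = Y (take k Bs)"
    and opt: "\<And>Bs. length Bs = Suc k \<Longrightarrow> eps_opt h H eta (Y Bs) (V (Bs ! k) (Y Bs)) e (X Bs)"
  shows "measure_pmf.expectation (replicate_pmf (Suc k) P)
           (\<lambda>Bs. (V (Bs ! k) (Y Bs) - G (Y Bs)) \<bullet> (u (take k Bs) - X Bs))
         \<le> 3 * eta / 2 * measure_pmf.expectation (replicate_pmf (Suc k) P)
           (\<lambda>Bs. (wnorm (matrix_inv H) (V (Bs ! k) (Y Bs) - G (Y Bs)))\<^sup>2) + e"
proof -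
  define M where "M = replicate_pmf (Suc k) P"
  define \<Delta> where "\<Delta> Bs = V (Bs ! k) (Y Bs) - G (Y Bs)" for Bs
  define F where "F Bs = \<Delta> Bs \<bullet> (u (take k Bs) - X Bs)" for Bs
  define W where "W Bs = (wnorm (matrix_inv H) (\<Delta> Bs))\<^sup>2" for Bs
  define q where "q t xs = (SOME z. eps_opt h H eta (Y xs) (G (Y xs)) (t\<^sup>2) z)" for t xs
  define C where "C t Bs = \<Delta> Bs \<bullet> (u (take k Bs) - q t (take k Bs))" for t Bs
  have int: "integrable (measure_pmf M) f" for f :: "'a list \<Rightarrow> real"
    unfolding M_def by (simp add: integrable_measure_pmf_finite finite_set_pmf_replicate_pmf fin)
  have len: "length Bs = Suc k" if "Bs \<in> set_pmf M" for Bs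
    using that unfolding M_def set_replicate_pmf by simp
  have pointwise: "F Bs \<le> C t Bs + (3 * eta / 2 * W Bs / (1 - t) + (e + 3 * t))"
    if Bs: "length Bs = Suc k" and t: "0 < t" "t < 1" for Bs t
  proof -
    obtain m where "(INF z. subprob h H eta (Y Bs) (G (Y Bs)) z) = ereal m"
      using eps_opt_INF_change_grad[OF S h_convex h_proper eta opt[OF Bs]] by blast
    then have "\<exists>z. eps_opt h H eta (Y Bs) (G (Y Bs)) (t\<^sup>2) z"
      by (rule eps_opt_exists) (use t in simp)
    then have "eps_opt h H eta (Y Bs) (G (Y Bs)) (t\<^sup>2) (q t (take k Bs))"
      unfolding q_def adapted[OF Bs, symmetric] by (rule someI_ex)
    from eps_opt_inner_bound[OF S h_convex h_proper eta t _ opt[OF Bs] this]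
    have "(q t (take k Bs) - X Bs) \<bullet> \<Delta> Bs
        \<le> 3 * eta / (2 * (1 - t)) * quad_form (matrix_inv H) (\<Delta> Bs) + e + 3 * t"
      using t by (simp add: \<Delta>_def power2_eq_square)
    then show ?thesis
      using sym_pos_def_mat_matrix_inv[OF S]
      by (simp add: F_def C_def W_def wnorm_square inner_diff_right inner_commute)
  qed
  have centered: "measure_pmf.expectation M (C t) = 0" for t
  proof -
    have "measure_pmf.expectation P (\<lambda>B. C t (xs @ [B])) = 0"
      if "xs \<in> set_pmf (replicate_pmf k P)" for xs
    proof -
      have "length xs = k" using that by (simp add: set_replicate_pmf)
      then have "C t (xs @ [B]) = (V B (Y xs) - G (Y xs)) \<bullet> (u xs - q t xs)" for B
        using adapted[of "xs @ [B]"] by (simp add: C_def \<Delta>_def nth_append)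
      then show ?thesis by (simp add: unbiased)
    qed
    then show ?thesis
      unfolding M_def expectation_replicate_pmf_Suc[OF fin]
      by (subst integral_cong_AE[where g = "\<lambda>_. 0"]) (auto simp: AE_measure_pmf_iff)
  qed
  have "measure_pmf.expectation M F \<le> 3 * eta / 2 * measure_pmf.expectation M W / (1 - t) + e + 3 * t"
    if t: "0 < t" "t < 1" for t
  proof -
    have "measure_pmf.expectation M F
        \<le> measure_pmf.expectation M (\<lambda>Bs. C t Bs + (3 * eta / 2 * W Bs / (1 - t) + (e + 3 * t)))"
      using pointwise[OF len t] by (intro integral_mono_AE int AE_pmfI)
    then show ?thesis
      by (simp add: int Bochner_Integration.integral_add centered)
  qed
  then have "measure_pmf.expectation M F \<le> 3 * eta / 2 * measure_pmf.expectation M W + e"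
    by (rule le_of_forall_le_div_one_minus)
  then show ?thesis unfolding M_def F_def W_def \<Delta>_def .
qed

theorem lemma5:
  fixes n b T k :: nat
    and fs :: "nat \<Rightarrow> real^'d \<Rightarrow> real"
    and gf :: "nat \<Rightarrow> real^'d \<Rightarrow> real^'d"
    and L :: "nat \<Rightarrow> real"
    and h :: "real^'d \<Rightarrow> ereal"
    and H :: "real^'d^'d"
    and mu eta tau :: real
    and eps :: "nat \<Rightarrow> real"
    and xt :: "real^'d"
    and sel :: "nat list list \<Rightarrow> real^'d"
    and u :: "nat list list \<Rightarrow> real^'d"
  assumes n_pos: "n > 0"
    and b_pos: "b > 0"
    and H_spd: "sym_pos_def_mat H"
    and fs_convex: "\<And>i. i < n \<Longrightarrow> convex_on UNIV (fs i)"
    and fs_grad: "\<And>i x. i < n \<Longrightarrow> (fs i has_derivative (\<lambda>w. gf i x \<bullet> w)) (at x)"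
    and smooth: "\<And>i x y. i < n \<Longrightarrow>
        wnorm (matrix_inv H) (gf i x - gf i y) \<le> L i * wnorm H (x - y)"
    and strong_convex: "mu > 0"
       "\<And>x y. (1 / real n) * (\<Sum>i<n. fs i y) \<ge> (1 / real n) * (\<Sum>i<n. fs i x)
              + fgrad n gf x \<bullet> (y - x) + mu / 2 * (wnorm H (y - x))\<^sup>2"
    and h_proper: "proper_fun h"
    and h_convex: "econvex h"
    and h_lsc: "lsc_fun h"
    and h_dom_closed: "closed (edom h)"
    and eta: "0 < eta" "eta \<le> 1 / Lavg n L"
    and tau: "0 < tau" "tau < 1"
    and eps_nonneg: "\<And>j. eps j \<ge> 0"
    and sel_opt: "\<And>Bs j. j < T \<Longrightarrow> length Bs = Suc j \<Longrightarrow>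
        (let xz = traj n L gf eta tau mu xt sel Bs j;
             y = y_of tau (fst xz) (snd xz);
             v = vr_grad n L gf b xt (Bs ! j) y
         in eps_opt h H eta y v (eps j) (sel Bs))"
    and k: "k < T"
  shows "measure_pmf.expectation (replicate_pmf (Suc k) (batch_pmf n L b))
           (\<lambda>Bs. let xz = traj n L gf eta tau mu xt sel Bs k;
                     y = y_of tau (fst xz) (snd xz);
                     v = vr_grad n L gf b xt (Bs ! k) y;
                     \<Delta> = v - fgrad n gf y
                 in \<Delta> \<bullet> (u (take k Bs) - fst (traj n L gf eta tau mu xt sel Bs (Suc k))))
         \<le> 3 * eta / 2 *
           measure_pmf.expectation (replicate_pmf (Suc k) (batch_pmf n L b))
           (\<lambda>Bs. let xz = traj n L gf eta tau mu xt sel Bs k;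
                     y = y_of tau (fst xz) (snd xz);
                     v = vr_grad n L gf b xt (Bs ! k) y;
                     \<Delta> = v - fgrad n gf y
                 in (wnorm (matrix_inv H) \<Delta>)\<^sup>2)
           + eps k"
proof -
  have L_nonneg: "0 \<le> L i" if "i < n" for i
    using lipschitz_wnorm_const_nonneg[OF H_spd sym_pos_def_mat_matrix_inv[OF H_spd] smooth[OF that]] .
  have L_avg: "Lavg n L > 0"
    using eta zero_less_divide_1_iff[of "Lavg n L"] by linarith
  have grad_const: "gf i x = gf i y" if "i < n" "L i = 0" for i x y
    by (rule lipschitz_wnorm_const_zero[OF sym_pos_def_mat_matrix_inv[OF H_spd] smooth[OF that(1)] that(2)])
  define Y where "Y Bs = y_of tau (fst (traj n L gf eta tau mu xt sel Bs k))
                             (snd (traj n L gf eta tau mu xt sel Bs k))" for Bs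
  have adapted: "Y Bs = Y (take k Bs)" if "length Bs = Suc k" for Bs
    using traj_append[of k "take k Bs" _ _ _ _ _ _ xt sel "drop k Bs"] that by (simp add: Y_def)
  have opt: "eps_opt h H eta (Y Bs) (vr_grad n L gf b xt (Bs ! k) (Y Bs)) (eps k)
               (fst (traj n L gf eta tau mu xt sel Bs (Suc k)))" if "length Bs = Suc k" for Bs
  proof -
    have "fst (traj n L gf eta tau mu xt sel Bs (Suc k)) = sel Bs"
      using that by (simp add: Let_def split_def)
    then show ?thesis using sel_opt[OF k that] by (simp only: Y_def Let_def)
  qed
  show ?thesis
    unfolding Let_def using expectation_noise_inner_le[OF finite_set_pmf_batch_pmf[OF n_pos L_nonneg L_avg]
        H_spd h_convex h_proper eta(1)
        expectation_vr_grad_error_inner[OF n_pos b_pos L_nonneg L_avg grad_const] adapted opt]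
    unfolding Y_def Let_def .
qed

end
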